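(* Let $P$ be a finite poset with $n$ elements and $\theta:P\to[n]$ a bijection. Then $$\hat K_{P,\theta}=\sum_{N\ge n}\ \sum_{w\in\tilde{\mathcal J}_N(P,\theta)}\hat L_{\mathcal C(w)}.$$
   Context: A $(P,\theta)$-multiset-valued partition is a map $\sigma$ from $P$ to nonempty finite multisets of positive integers such that for every covering relation $s\lessdot t$ in $P$: $\max\sigma(s)\le\min\sigma(t)$ if $\theta(s)<\theta(t)$, and $\max\sigma(s)<\min\sigma(t)$ if $\theta(s)>\theta(t)$. $\hat K_{P,\theta}=\sum_\sigma\prod_{r\ge1}x_r^{m_r(\sigma)}$, summed over all such $\sigma$, where $m_r(\sigma)$ is the total multiplicity of $r$ in all the multisets $\sigma(p)$, $p\in P$. A linear multi-extension of $P$ by $[N]$ ($N\ge n$) is a map $e$ from $P$ to nonempty subsets of $[N]$ such that $\max e(x)<\min e(y)$ whenever $x<y$ in $P$, each $i\in[N]$ lies in $e(x)$ for exactly one $x\in P$ (denoted $e^{-1}(i)$), and no $e(x)$ contains both $i$ and $i+1$. $\tilde{\mathcal J}_N(P,\theta)$ is the set of words $\theta(e^{-1}(1))\theta(e^{-1}(2))\cdots\theta(e^{-1}(N))$ over all linear multi-extensions $e$ of $P$ by $[N]$. For a word $w=w_1\cdots w_N$ with no two consecutive letters equal, $\mathcal C(w)=(s_1,s_2-s_1,\dots,N-s_k)$ where $\{s_1<\dots<s_k\}=\{i:w_i>w_{i+1}\}$. For a composition $\alpha=(\alpha_1,\dots,\alpha_k)$ of $m$ with $S_\alpha=\{\alpha_1,\alpha_1+\alpha_2,\dots,\alpha_1+\dots+\alpha_{k-1}\}$,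 $\hat L_\alpha=\sum x^\sigma$ over all sequences $(\sigma_1,\dots,\sigma_m)$ of nonempty finite multisets of positive integers with $\max\sigma_j\le\min\sigma_{j+1}$ for all $j$ and strict inequality when $j\in S_\alpha$, with $x^\sigma$ the monomial counting multiplicities. *)

theory Defs
  imports Complex_Main "HOL-Library.Multiset"
begin

text \<open>Formal power series in x_1, x_2, ... are represented by their coefficient
  functions: a monomial prod_r x_r^(m_r) is the multiset of positive integers in which
  r has multiplicity m_r; a series is a map from monomials to real coefficients.\<close>

text \<open>The finite poset P is a finite carrier set inside an ordered type, with the induced order.\<close>

definition covers :: "'a::order set \<Rightarrow> 'a \<Rightarrow> 'a \<Rightarrow> bool" where
  "covers P s t \<longleftrightarrow> s \<in> P \<and> t \<in> P \<and> s < t \<and> \<not> (\<exists>u\<in>P. s < u \<and> u < t)"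

definition pos_mset :: "nat multiset \<Rightarrow> bool" where
  "pos_mset M \<longleftrightarrow> M \<noteq> {#} \<and> 0 \<notin># M"

definition mmax :: "nat multiset \<Rightarrow> nat" where "mmax M = Max (set_mset M)"
definition mmin :: "nat multiset \<Rightarrow> nat" where "mmin M = Min (set_mset M)"

definition mvp :: "'a::order set \<Rightarrow> ('a \<Rightarrow> nat) \<Rightarrow> ('a \<Rightarrow> nat multiset) \<Rightarrow> bool" where
  "mvp P \<theta> \<sigma> \<longleftrightarrow> (\<forall>p\<in>P. pos_mset (\<sigma> p)) \<and> (\<forall>x. x \<notin> P \<longrightarrow> \<sigma> x = {#}) \<and>
     (\<forall>s t. covers P s t \<longrightarrow>
        (\<theta> s < \<theta> t \<longrightarrow> mmax (\<sigma> s) \<le> mmin (\<sigma> t)) \<and>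
        (\<theta> s > \<theta> t \<longrightarrow> mmax (\<sigma> s) < mmin (\<sigma> t)))"

text \<open>Coefficient of the monomial mu in hat K_{P,theta}.\<close>
definition Khat :: "'a::order set \<Rightarrow> ('a \<Rightarrow> nat) \<Rightarrow> nat multiset \<Rightarrow> real" where
  "Khat P \<theta> \<mu> = real (card {\<sigma>. mvp P \<theta> \<sigma> \<and> (\<Sum>p\<in>P. \<sigma> p) = \<mu>})"

definition lin_multi_ext :: "'a::order set \<Rightarrow> nat \<Rightarrow> ('a \<Rightarrow> nat set) \<Rightarrow> bool" where
  "lin_multi_ext P N e \<longleftrightarrow>
     (\<forall>x\<in>P. e x \<noteq> {} \<and> e x \<subseteq> {1..N}) \<and> (\<forall>x. x \<notin> P \<longrightarrow> e x = {}) \<and>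
     (\<forall>x\<in>P. \<forall>y\<in>P. x < y \<longrightarrow> Max (e x) < Min (e y)) \<and>
     (\<forall>i\<in>{1..N}. \<exists>!x. x \<in> P \<and> i \<in> e x) \<and>
     (\<forall>x\<in>P. \<forall>i. \<not> (i \<in> e x \<and> Suc i \<in> e x))"

definition ext_word :: "'a set \<Rightarrow> ('a \<Rightarrow> nat) \<Rightarrow> nat \<Rightarrow> ('a \<Rightarrow> nat set) \<Rightarrow> nat list" where
  "ext_word P \<theta> N e = map (\<lambda>i. \<theta> (THE x. x \<in> P \<and> i \<in> e x)) [1..<N+1]"

definition Jtilde :: "'a::order set \<Rightarrow> ('a \<Rightarrow> nat) \<Rightarrow> nat \<Rightarrow> nat list set" where
  "Jtilde P \<theta> N = {ext_word P \<theta> N e | e. lin_multi_ext P N e}"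

text \<open>Descent set of a word w_1...w_N (1-indexed positions i with w_i > w_(i+1)) and
  the composition C(w).\<close>
definition descents :: "nat list \<Rightarrow> nat set" where
  "descents w = {i. 1 \<le> i \<and> i < length w \<and> w ! (i - 1) > w ! i}"

definition comp_of_word :: "nat list \<Rightarrow> nat list" where
  "comp_of_word w = (let s = sorted_list_of_set (descents w)
                     in map2 (-) (s @ [length w]) (0 # s))"

definition Sset :: "nat list \<Rightarrow> nat set" where
  "Sset \<alpha> = {sum_list (take j \<alpha>) | j. 1 \<le> j \<and> j < length \<alpha>}"

text \<open>Coefficient of the monomial mu in hat L_alpha; sequences (sigma_1,...,sigma_m) are
  encoded 0-indexed as sigma 0, ..., sigma (m-1), and empty beyond.\<close>
definition Lhat :: "nat list \<Rightarrow> nat multiset \<Rightarrow> real" where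
  "Lhat \<alpha> \<mu> = real (card {\<sigma> :: nat \<Rightarrow> nat multiset.
      (\<forall>j. j \<ge> sum_list \<alpha> \<longrightarrow> \<sigma> j = {#}) \<and>
      (\<forall>j < sum_list \<alpha>. pos_mset (\<sigma> j)) \<and>
      (\<forall>j. Suc j < sum_list \<alpha> \<longrightarrow>
          mmax (\<sigma> j) \<le> mmin (\<sigma> (Suc j)) \<and>
          (Suc j \<in> Sset \<alpha> \<longrightarrow> mmax (\<sigma> j) < mmin (\<sigma> (Suc j)))) \<and>
      (\<Sum>j < sum_list \<alpha>. \<sigma> j) = \<mu>})"

end

theory Submission
  imports Defs "HOL-Library.Product_Lexorder"
begin

text \<open>List all entries of a multiset-valued function \<sigma>, i.e. the pairs (a, x) with a \<in> \<sigma>(x),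
  in lexicographic order of (a, \<theta>(x)) and cut this list into maximal runs of a common label x.
  For injective \<theta> the resulting chain of blocks is determined by its content \<sigma>. When \<sigma> is a
  (P,\<theta>)-multiset-valued partition, the conditions along covering relations say precisely that
  entries increase lexicographically from s to t, so x < y in P puts every block of x before
  every block of y: the label sequence is a linear multi-extension e of P. Given e, the blocks
  of a chain with label sequence e are exactly the sequences counted by hat L of the
  composition of the word \<theta> \<circ> e, since equal values at a block boundary are allowed precisely
  where \<theta> ascends. Hence \<sigma> \<mapsto> (N, e, blocks) is a bijection, and N never exceeds the size of
  the monomial, so each coefficient of the series is a finite sum.\<close>

section \<open>Lexicographic chains of blocks\<close>

definition lex_chain ::
  "('a \<Rightarrow> 'b::linorder) \<Rightarrow> nat \<Rightarrow> (nat \<Rightarrow> 'a) \<Rightarrow> (nat \<Rightarrow> 'v::linorder multiset) \<Rightarrow> bool" where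
  "lex_chain \<theta> N lb \<tau> \<longleftrightarrow> (\<forall>j<N. \<tau> j \<noteq> {#}) \<and>
     (\<forall>j. Suc j < N \<longrightarrow> lb j \<noteq> lb (Suc j) \<and>
        (\<forall>a\<in>#\<tau> j. \<forall>b\<in>#\<tau> (Suc j). (a, \<theta> (lb j)) < (b, \<theta> (lb (Suc j)))))"

definition chain_content :: "nat \<Rightarrow> (nat \<Rightarrow> 'a) \<Rightarrow> (nat \<Rightarrow> 'v multiset) \<Rightarrow> 'a \<Rightarrow> 'v multiset" where
  "chain_content N lb \<tau> x = (\<Sum>j<N. if lb j = x then \<tau> j else {#})"

lemma in_chain_content_iff: "b \<in># chain_content N lb \<tau> x \<longleftrightarrow> (\<exists>j<N. lb j = x \<and> b \<in># \<tau> j)"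
  unfolding chain_content_def by (auto simp: set_mset_sum split: if_splits)

lemma block_subseteq_chain_content: "j < N \<Longrightarrow> \<tau> j \<subseteq># chain_content N lb \<tau> (lb j)"
  unfolding chain_content_def by (simp add: sum.remove[of _ j])

lemma chain_content_0 [simp]: "chain_content 0 lb \<tau> x = {#}"
  unfolding chain_content_def by simp

lemma chain_content_Suc:
  "chain_content (Suc N) lb \<tau> x =
     (if lb 0 = x then \<tau> 0 else {#}) + chain_content N (\<lambda>j. lb (Suc j)) (\<lambda>j. \<tau> (Suc j)) x"
  unfolding chain_content_def by (simp only: sum.lessThan_Suc_shift)

lemma chain_content_cong: "\<forall>j<N. lb j = lb' j \<Longrightarrow> chain_content N lb \<tau> = chain_content N lb' \<tau>"
  unfolding chain_content_def by (intro ext sum.cong) auto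

lemma lex_chain_Suc:
  "lex_chain \<theta> (Suc N) lb \<tau> \<Longrightarrow> lex_chain \<theta> N (\<lambda>j. lb (Suc j)) (\<lambda>j. \<tau> (Suc j))"
  unfolding lex_chain_def by auto

lemma lex_chain_content_nonempty:
  assumes "lex_chain \<theta> N lb \<tau>" "j < N"
  shows "chain_content N lb \<tau> (lb j) \<noteq> {#}"
  using assms block_subseteq_chain_content[of j N \<tau> lb] unfolding lex_chain_def
  by (metis subset_mset.le_zero_eq)

lemma lex_chain_less:
  assumes c: "lex_chain \<theta> N lb \<tau>" and "i < j" "j < N" "a \<in># \<tau> i" "b \<in># \<tau> j"
  shows "(a, \<theta> (lb i)) < (b, \<theta> (lb j))"
  using assms(2-5)
proof (induction j arbitrary: b)
  case 0
  then show ?case by simp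
next
  case (Suc k)
  have step: "(c, \<theta> (lb k)) < (b, \<theta> (lb (Suc k)))" if "c \<in># \<tau> k" for c
    using c Suc.prems that unfolding lex_chain_def by blast
  show ?case
  proof (cases "i = k")
    case True
    then show ?thesis using step Suc.prems by simp
  next
    case False
    obtain c where c_in: "c \<in># \<tau> k" using c Suc.prems unfolding lex_chain_def by force
    have "(a, \<theta> (lb i)) < (c, \<theta> (lb k))" using Suc.IH[OF _ _ _ c_in] Suc.prems False by simp
    then show ?thesis using step[OF c_in] by (rule less_trans)
  qed
qed

lemma lex_chain_Cons:
  assumes c: "lex_chain \<theta> N lb \<tau>" and M: "M \<noteq> {#}"
    and first: "0 < N \<Longrightarrow> x \<noteq> lb 0 \<and> (\<forall>a\<in>#M. \<forall>b\<in>#\<tau> 0. (a, \<theta> x) < (b, \<theta> (lb 0)))"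
  shows "lex_chain \<theta> (Suc N) (case_nat x lb) (case_nat M \<tau>)"
  unfolding lex_chain_def
proof (intro conjI allI impI)
  fix j assume "j < Suc N"
  then show "case_nat M \<tau> j \<noteq> {#}" using c M unfolding lex_chain_def by (cases j) auto
next
  fix j assume j: "Suc j < Suc N"
  show "case_nat x lb j \<noteq> case_nat x lb (Suc j)"
    using j c first unfolding lex_chain_def by (cases j) auto
  show "\<forall>a\<in>#case_nat M \<tau> j. \<forall>b\<in>#case_nat M \<tau> (Suc j).
          (a, \<theta> (case_nat x lb j)) < (b, \<theta> (case_nat x lb (Suc j)))"
    using j c first unfolding lex_chain_def by (cases j) auto
qed

lemma chain_content_Cons:
  "chain_content (Suc N) (case_nat x lb) (case_nat M \<tau>) = (chain_content N lb \<tau>)(x := M + chain_content N lb \<tau> x)"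
  by (auto simp: chain_content_Suc)

definition below_others ::
  "('a \<Rightarrow> 'b::linorder) \<Rightarrow> ('a \<Rightarrow> 'v::linorder multiset) \<Rightarrow> 'a \<Rightarrow> 'v \<Rightarrow> bool" where
  "below_others \<theta> c x u \<longleftrightarrow> (\<forall>z b. z \<noteq> x \<longrightarrow> b \<in># c z \<longrightarrow> (u, \<theta> x) < (b, \<theta> z))"

lemma lex_chain_first_below_others:
  assumes c: "lex_chain \<theta> N lb \<tau>" and u: "u \<in># \<tau> 0"
  shows "below_others \<theta> (chain_content N lb \<tau>) (lb 0) u"
  unfolding below_others_def
proof (intro allI impI)
  fix z b assume z: "z \<noteq> lb 0" and "b \<in># chain_content N lb \<tau> z"
  then obtain j where j: "j < N" "lb j = z" "b \<in># \<tau> j" unfolding in_chain_content_iff by blast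
  with z have "0 < j" by (cases j) auto
  with lex_chain_less[OF c this j(1) u j(3)] j(2) show "(u, \<theta> (lb 0)) < (b, \<theta> z)" by simp
qed

text \<open>A later block at the same
  label lies above the (differently labelled) second block.\<close>

lemma lex_chain_first_block:
  assumes c: "lex_chain \<theta> (Suc N) lb \<tau>"
  defines "C \<equiv> chain_content (Suc N) lb \<tau>"
  shows "\<tau> 0 = filter_mset (below_others \<theta> C (lb 0)) (C (lb 0))"
proof -
  define R where "R = chain_content N (\<lambda>j. lb (Suc j)) (\<lambda>j. \<tau> (Suc j)) (lb 0)"
  have split: "C (lb 0) = \<tau> 0 + R" unfolding C_def R_def chain_content_Suc by simp
  have later: "\<not> below_others \<theta> C (lb 0) u" if "u \<in># R" for u
  proof
    assume below: "below_others \<theta> C (lb 0) u"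
    have "\<exists>j<N. lb (Suc j) = lb 0 \<and> u \<in># \<tau> (Suc j)"
      using that by (simp add: R_def in_chain_content_iff)
    then obtain j where j: "j < N" "lb (Suc j) = lb 0" "u \<in># \<tau> (Suc j)" by blast
    have lb1: "lb 1 \<noteq> lb 0" and "\<tau> 1 \<noteq> {#}" using c j(1) unfolding lex_chain_def by auto
    then obtain b where b: "b \<in># \<tau> 1" by blast
    have "0 < j" using j(2) lb1 by (cases j) auto
    then have "(b, \<theta> (lb 1)) < (u, \<theta> (lb 0))" using lex_chain_less[OF c _ _ b j(3)] j by simp
    moreover have "b \<in># C (lb 1)"
      using block_subseteq_chain_content[of 1 "Suc N" \<tau> lb] b j(1) unfolding C_def
      by (auto dest: mset_subset_eqD)
    then have "(u, \<theta> (lb 0)) < (b, \<theta> (lb 1))" using below lb1 unfolding below_others_def by blast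
    ultimately show False by (meson order.asym)
  qed
  have "filter_mset (below_others \<theta> C (lb 0)) (\<tau> 0) = \<tau> 0"
    using lex_chain_first_below_others[OF c] unfolding C_def by (simp add: filter_mset_eq_conv)
  with later show ?thesis unfolding split by simp
qed

lemma lex_chain_unique:
  assumes "lex_chain \<theta> N lb \<tau>" "lex_chain \<theta> N' lb' \<tau>'"
    and "chain_content N lb \<tau> = chain_content N' lb' \<tau>'"
  shows "N = N' \<and> (\<forall>j<N. lb j = lb' j \<and> \<tau> j = \<tau>' j)"
  using assms
proof (induction N arbitrary: N' lb \<tau> lb' \<tau>')
  case 0
  then show ?case
    using lex_chain_content_nonempty[of \<theta> N' lb' \<tau>' 0] fun_cong[OF "0.prems"(3), of "lb' 0"]
    by (cases N') auto
next
  case (Suc N)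
  note c = Suc.prems(1) and c' = Suc.prems(2) and content = Suc.prems(3)
  obtain M where N': "N' = Suc M"
    using content lex_chain_content_nonempty[OF c, of 0] by (cases N') auto
  have lb0: "lb 0 = lb' 0"
  proof (rule ccontr)
    assume ne: "lb 0 \<noteq> lb' 0"
    obtain u u' where u: "u \<in># \<tau> 0" and u': "u' \<in># \<tau>' 0"
      using c c' N' unfolding lex_chain_def by blast
    have "u' \<in># chain_content (Suc N) lb \<tau> (lb' 0)"
      using block_subseteq_chain_content[of 0 N' \<tau>' lb'] u' content N' by (auto dest: mset_subset_eqD)
    then have "(u, \<theta> (lb 0)) < (u', \<theta> (lb' 0))"
      using lex_chain_first_below_others[OF c u] ne[symmetric] unfolding below_others_def by blast
    moreover have "u \<in># chain_content N' lb' \<tau>' (lb 0)"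
      using block_subseteq_chain_content[of 0 "Suc N" \<tau> lb] u content by (auto dest: mset_subset_eqD)
    then have "(u', \<theta> (lb' 0)) < (u, \<theta> (lb 0))"
      using lex_chain_first_below_others[OF c' u'] ne unfolding below_others_def by blast
    ultimately show False by (meson order.asym)
  qed
  have \<tau>0: "\<tau> 0 = \<tau>' 0"
    using lex_chain_first_block[OF c] lex_chain_first_block[OF c'[unfolded N']] lb0 content N'
    by simp
  have "chain_content N (\<lambda>j. lb (Suc j)) (\<lambda>j. \<tau> (Suc j)) =
        chain_content M (\<lambda>j. lb' (Suc j)) (\<lambda>j. \<tau>' (Suc j))"
  proof
    fix x show "chain_content N (\<lambda>j. lb (Suc j)) (\<lambda>j. \<tau> (Suc j)) x =
                chain_content M (\<lambda>j. lb' (Suc j)) (\<lambda>j. \<tau>' (Suc j)) x"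
      using fun_cong[OF content, of x] unfolding N' chain_content_Suc lb0 \<tau>0 by simp
  qed
  from Suc.IH[OF lex_chain_Suc[OF c] lex_chain_Suc[OF c'[unfolded N']] this]
  show ?case using lb0 \<tau>0 N' by (auto simp: less_Suc_eq_0_disj)
qed

lemma ex_below_others:
  assumes "finite P" "inj_on \<theta> P" "\<forall>x. x \<notin> P \<longrightarrow> c x = {#}" "c x \<noteq> {#}"
  obtains x0 u0 where "u0 \<in># c x0" "below_others \<theta> c x0 u0"
proof -
  define E where "E = (SIGMA z:P. set_mset (c z))"
  have "finite E" unfolding E_def using assms(1) by auto
  moreover have "E \<noteq> {}" unfolding E_def using assms(3,4) by fastforce
  ultimately have "Min ((\<lambda>(z, b). (b, \<theta> z)) ` E) \<in> (\<lambda>(z, b). (b, \<theta> z)) ` E" by simp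
  then obtain x0 u0 where p: "(x0, u0) \<in> E" "(u0, \<theta> x0) = Min ((\<lambda>(z, b). (b, \<theta> z)) ` E)"
    by auto
  have "below_others \<theta> c x0 u0"
    unfolding below_others_def
  proof (intro allI impI)
    fix z b assume z: "z \<noteq> x0" and b: "b \<in># c z"
    then have "(z, b) \<in> E" unfolding E_def using assms(3) by fastforce
    then have "(u0, \<theta> x0) \<le> (b, \<theta> z)" using p(2) \<open>finite E\<close> by (simp add: image_iff rev_bexI)
    moreover have "\<theta> x0 \<noteq> \<theta> z"
      using assms(2) z p(1) \<open>(z, b) \<in> E\<close> unfolding E_def inj_on_def by blast
    ultimately show "(u0, \<theta> x0) < (b, \<theta> z)" by auto
  qed
  with p(1) show ?thesis unfolding E_def using that by blast
qed

lemma below_others_block_precedes: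
  fixes \<theta> :: "'a \<Rightarrow> 'b::linorder" and c :: "'a \<Rightarrow> 'v::linorder multiset" and x0 :: 'a
  defines "M \<equiv> filter_mset (below_others \<theta> c x0) (c x0)"
  assumes chain: "lex_chain \<theta> N lb \<tau>" and content: "chain_content N lb \<tau> = c(x0 := c x0 - M)"
    and N: "0 < N"
  shows "x0 \<noteq> lb 0 \<and> (\<forall>a\<in>#M. \<forall>b\<in>#\<tau> 0. (a, \<theta> x0) < (b, \<theta> (lb 0)))"
proof -
  have rest: "c x0 - M = filter_mset (\<lambda>u. \<not> below_others \<theta> c x0 u) (c x0)"
    unfolding M_def by (metis multiset_partition add_diff_cancel_left')
  have first_in: "b \<in># (c(x0 := c x0 - M)) (lb 0)" if "b \<in># \<tau> 0" for b
    using block_subseteq_chain_content[OF N, of \<tau> lb] that content by (auto dest: mset_subset_eqD)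
  obtain u where u: "u \<in># \<tau> 0" using chain N unfolding lex_chain_def by blast
  have "x0 \<noteq> lb 0"
  proof
    assume lb0: "x0 = lb 0"
    have "\<not> below_others \<theta> c x0 u" using first_in[OF u] lb0 rest by simp
    then obtain z b where "z \<noteq> x0" "b \<in># c z" "\<not> (u, \<theta> x0) < (b, \<theta> z)"
      unfolding below_others_def by blast
    moreover have "below_others \<theta> (c(x0 := c x0 - M)) x0 u"
      using lex_chain_first_below_others[OF chain u] content lb0 by simp
    ultimately show False unfolding below_others_def by auto
  qed
  moreover have "(a, \<theta> x0) < (b, \<theta> (lb 0))" if "a \<in># M" "b \<in># \<tau> 0" for a b
    using that first_in[of b] \<open>x0 \<noteq> lb 0\<close> unfolding M_def below_others_def by auto
  ultimately show ?thesis by blast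
qed

text \<open>Induction on the total size of the content: the entries at x0 that lie below everything
  else form the first block.\<close>

lemma lex_chain_exists:
  assumes fin: "finite P" and inj: "inj_on \<theta> P" and supp: "\<forall>x. x \<notin> P \<longrightarrow> c x = {#}"
  shows "\<exists>N lb \<tau>. lex_chain \<theta> N lb \<tau> \<and> chain_content N lb \<tau> = c \<and> (\<forall>j\<ge>N. \<tau> j = {#})"
  using supp
proof (induction "\<Sum>x\<in>P. size (c x)" arbitrary: c rule: less_induct)
  case less
  show ?case
  proof (cases "\<forall>x. c x = {#}")
    case True
    then have "lex_chain \<theta> 0 lb (\<lambda>_. {#}) \<and> chain_content 0 lb (\<lambda>_. {#}) = c" for lb
      unfolding lex_chain_def by auto
    then show ?thesis by blast
  next
    case False
    then obtain x0 u0 where u0: "u0 \<in># c x0" "below_others \<theta> c x0 u0"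
      using ex_below_others[OF fin inj less.prems] by blast
    have x0: "x0 \<in> P" using u0(1) less.prems by force
    define M where "M = filter_mset (below_others \<theta> c x0) (c x0)"
    define c' where "c' = c(x0 := c x0 - M)"
    have M_sub: "M \<subseteq># c x0" and "M \<noteq> {#}" using u0 unfolding M_def by auto
    moreover have "size M \<le> size (c x0)" using M_sub by (rule size_mset_mono)
    ultimately have "(\<Sum>x\<in>P. size (c' x)) < (\<Sum>x\<in>P. size (c x))"
      unfolding c'_def using fin x0
      by (intro sum_strict_mono_ex1) (auto simp: size_Diff_submset nonempty_has_size intro!: bexI[of _ x0])
    then obtain N lb \<tau> where c: "lex_chain \<theta> N lb \<tau>" and content: "chain_content N lb \<tau> = c'"
      and zero: "\<forall>j\<ge>N. \<tau> j = {#}"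
      using less.hyps[of c'] less.prems unfolding c'_def by fastforce
    have "chain_content (Suc N) (case_nat x0 lb) (case_nat M \<tau>) = c"
      unfolding chain_content_Cons content c'_def using M_sub by (auto simp: subset_mset.add_diff_inverse)
    moreover have "\<forall>j\<ge>Suc N. case_nat M \<tau> j = {#}" using zero by (auto split: nat.split)
    moreover have "lex_chain \<theta> (Suc N) (case_nat x0 lb) (case_nat M \<tau>)"
      using lex_chain_Cons[OF c \<open>M \<noteq> {#}\<close>] below_others_block_precedes[OF c] content
      unfolding M_def c'_def by blast
    ultimately show ?thesis by blast
  qed
qed

section \<open>Multiset-valued partitions as chains\<close>

lemma mmax_ge: "a \<in># M \<Longrightarrow> a \<le> mmax M"
  unfolding mmax_def by simp

lemma mmin_le: "a \<in># M \<Longrightarrow> mmin M \<le> a"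
  unfolding mmin_def by simp

lemma mmax_in: "M \<noteq> {#} \<Longrightarrow> mmax M \<in># M"
  unfolding mmax_def by simp

lemma mmin_in: "M \<noteq> {#} \<Longrightarrow> mmin M \<in># M"
  unfolding mmin_def by simp

text \<open>The sequence of labels of a linear multi-extension e, i.e. j \<mapsto> e\<inverse>(j + 1) for j < N.\<close>

definition multi_ext_labelling :: "'a::order set \<Rightarrow> nat \<Rightarrow> (nat \<Rightarrow> 'a) \<Rightarrow> bool" where
  "multi_ext_labelling P N lb \<longleftrightarrow> (\<forall>j<N. lb j \<in> P) \<and> (\<forall>j. Suc j < N \<longrightarrow> lb j \<noteq> lb (Suc j)) \<and>
     (\<forall>x\<in>P. \<exists>j<N. lb j = x) \<and> (\<forall>i<N. \<forall>j<N. lb i < lb j \<longrightarrow> i < j)"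

lemma mvp_lex_less:
  fixes P :: "'a::order set"
  assumes fin: "finite P" and inj: "inj_on \<theta> P" and mvp: "mvp P \<theta> \<sigma>"
  shows "x \<in> P \<Longrightarrow> y \<in> P \<Longrightarrow> x < y \<Longrightarrow> a \<in># \<sigma> x \<Longrightarrow> b \<in># \<sigma> y \<Longrightarrow> (a, \<theta> x) < (b, \<theta> y)"
proof (induction "card {u\<in>P. x < u \<and> u < y}" arbitrary: x y a b rule: less_induct)
  case less
  show ?case
  proof (cases "\<exists>u\<in>P. x < u \<and> u < y")
    case False
    then have cov: "covers P x y" unfolding covers_def using less.prems by auto
    have "\<theta> x \<noteq> \<theta> y" using inj less.prems by (metis inj_on_eq_iff less_irrefl)
    moreover have "a \<le> mmax (\<sigma> x)" "mmin (\<sigma> y) \<le> b" using less.prems by (simp_all add: mmax_ge mmin_le)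
    moreover have "\<theta> x < \<theta> y \<Longrightarrow> mmax (\<sigma> x) \<le> mmin (\<sigma> y)" "\<theta> y < \<theta> x \<Longrightarrow> mmax (\<sigma> x) < mmin (\<sigma> y)"
      using mvp cov unfolding mvp_def by blast+
    ultimately show ?thesis by (cases "\<theta> x < \<theta> y") auto
  next
    case True
    then obtain u where u: "u \<in> P" "x < u" "u < y" by blast
    then obtain c where c: "c \<in># \<sigma> u" using mvp unfolding mvp_def pos_mset_def by blast
    have fin_between: "finite {v\<in>P. x < v \<and> v < y}" using fin by simp
    have "card {v\<in>P. x < v \<and> v < u} < card {v\<in>P. x < v \<and> v < y}"
      by (rule psubset_card_mono[OF fin_between]) (use u in \<open>auto intro: order.strict_trans\<close>)
    then have "(a, \<theta> x) < (c, \<theta> u)" using less.hyps less.prems u c by blast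
    moreover have "card {v\<in>P. u < v \<and> v < y} < card {v\<in>P. x < v \<and> v < y}"
      by (rule psubset_card_mono[OF fin_between]) (use u in \<open>auto intro: order.strict_trans\<close>)
    then have "(c, \<theta> u) < (b, \<theta> y)" using less.hyps less.prems u c by blast
    ultimately show ?thesis by (rule less_trans)
  qed
qed

lemma sum_chain_content:
  assumes "finite P" "\<forall>j<N. lb j \<in> P"
  shows "(\<Sum>x\<in>P. chain_content N lb \<tau> x) = (\<Sum>j<N. \<tau> j)"
proof -
  have "(\<Sum>x\<in>P. chain_content N lb \<tau> x) = (\<Sum>j<N. \<Sum>x\<in>P. if lb j = x then \<tau> j else {#})"
    unfolding chain_content_def by (rule sum.swap)
  also have "\<dots> = (\<Sum>j<N. \<tau> j)"
    using assms by (intro sum.cong) (auto simp: sum.delta)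
  finally show ?thesis .
qed

lemma mvp_chain_content:
  fixes P :: "'a::order set"
  assumes c: "lex_chain \<theta> N lb \<tau>" and lb: "multi_ext_labelling P N lb" and pos: "\<forall>j<N. 0 \<notin># \<tau> j"
  shows "mvp P \<theta> (chain_content N lb \<tau>)"
proof -
  let ?\<sigma> = "chain_content N lb \<tau>"
  have nonempty: "?\<sigma> x \<noteq> {#}" if x: "x \<in> P" for x
  proof -
    obtain j where "j < N" "lb j = x" using lb x unfolding multi_ext_labelling_def by blast
    with lex_chain_content_nonempty[OF c \<open>j < N\<close>] show ?thesis by simp
  qed
  have less: "(a, \<theta> s) < (b, \<theta> t)" if st: "s < t" and a: "a \<in># ?\<sigma> s" and b: "b \<in># ?\<sigma> t" for s t a b
  proof -
    obtain i where i: "i < N" "lb i = s" "a \<in># \<tau> i" using a unfolding in_chain_content_iff by blast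
    obtain j where j: "j < N" "lb j = t" "b \<in># \<tau> j" using b unfolding in_chain_content_iff by blast
    have "lb i < lb j" using i(2) j(2) st by simp
    then have "i < j" using lb i(1) j(1) unfolding multi_ext_labelling_def by blast
    from lex_chain_less[OF c this j(1) i(3) j(3)] show ?thesis using i(2) j(2) by simp
  qed
  have cover: "(mmax (?\<sigma> s), \<theta> s) < (mmin (?\<sigma> t), \<theta> t)" if "covers P s t" for s t
  proof -
    have "s \<in> P" "t \<in> P" "s < t" using that unfolding covers_def by auto
    then show ?thesis using less mmax_in[OF nonempty] mmin_in[OF nonempty] by blast
  qed
  have "pos_mset (?\<sigma> x)" if "x \<in> P" for x
    using nonempty[OF that] pos unfolding pos_mset_def in_chain_content_iff by blast
  moreover have "?\<sigma> x = {#}" if x: "x \<notin> P" for x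
  proof (rule ccontr)
    assume "?\<sigma> x \<noteq> {#}"
    then obtain a where "a \<in># ?\<sigma> x" by blast
    with lb x show False unfolding in_chain_content_iff multi_ext_labelling_def by blast
  qed
  moreover have "mmax (?\<sigma> s) \<le> mmin (?\<sigma> t)" "\<theta> t < \<theta> s \<Longrightarrow> mmax (?\<sigma> s) < mmin (?\<sigma> t)"
    if "covers P s t" for s t
    using cover[OF that] by auto
  ultimately show ?thesis unfolding mvp_def by fast
qed

lemma mvp_lex_chain:
  fixes P :: "'a::order set"
  assumes fin: "finite P" and inj: "inj_on \<theta> P" and mvp: "mvp P \<theta> \<sigma>"
  obtains N lb \<tau> where "lex_chain \<theta> N lb \<tau>" "chain_content N lb \<tau> = \<sigma>" "\<forall>j\<ge>N. \<tau> j = {#}"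
    "\<forall>j<N. 0 \<notin># \<tau> j" "multi_ext_labelling P N lb"
proof -
  have supp: "\<forall>x. x \<notin> P \<longrightarrow> \<sigma> x = {#}" and pos: "\<forall>x\<in>P. pos_mset (\<sigma> x)"
    using mvp unfolding mvp_def by blast+
  obtain N lb \<tau> where c: "lex_chain \<theta> N lb \<tau>" and content: "chain_content N lb \<tau> = \<sigma>"
    and zero: "\<forall>j\<ge>N. \<tau> j = {#}"
    using lex_chain_exists[OF fin inj supp] by blast
  have block: "a \<in># \<sigma> (lb j)" if "j < N" "a \<in># \<tau> j" for j a
    using block_subseteq_chain_content[OF that(1), of \<tau> lb] that(2) content by (auto dest: mset_subset_eqD)
  have lb_in: "lb j \<in> P" if "j < N" for j
    using lex_chain_content_nonempty[OF c that] content supp by auto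
  have "\<forall>j<N. 0 \<notin># \<tau> j" using block lb_in pos unfolding pos_mset_def by blast
  moreover have "\<exists>j<N. lb j = x" if x: "x \<in> P" for x
  proof -
    obtain a where "a \<in># \<sigma> x" using pos x unfolding pos_mset_def by blast
    then show ?thesis unfolding content[symmetric] in_chain_content_iff by blast
  qed
  moreover have "i < j" if ij: "i < N" "j < N" "lb i < lb j" for i j
  proof (rule ccontr)
    assume "\<not> i < j"
    moreover have "i \<noteq> j" using ij(3) by auto
    ultimately have "j < i" by simp
    have "\<tau> i \<noteq> {#}" "\<tau> j \<noteq> {#}" using c ij(1,2) unfolding lex_chain_def by blast+
    then obtain a b where a: "a \<in># \<tau> i" and b: "b \<in># \<tau> j" by blast
    have "(b, \<theta> (lb j)) < (a, \<theta> (lb i))" using lex_chain_less[OF c \<open>j < i\<close> \<open>i < N\<close> b a] .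
    moreover have "(a, \<theta> (lb i)) < (b, \<theta> (lb j))"
      using mvp_lex_less[OF fin inj mvp lb_in[OF ij(1)] lb_in[OF ij(2)] ij(3) block[OF ij(1) a] block[OF ij(2) b]] .
    ultimately show False by (meson order.asym)
  qed
  ultimately have "multi_ext_labelling P N lb" "\<forall>j<N. 0 \<notin># \<tau> j"
    using c lb_in unfolding lex_chain_def multi_ext_labelling_def by blast+
  with c content zero that show ?thesis by blast
qed

section \<open>Linear multi-extensions as label sequences\<close>

definition ext_label :: "'a set \<Rightarrow> ('a \<Rightarrow> nat set) \<Rightarrow> nat \<Rightarrow> 'a" where
  "ext_label P e j = (THE x. x \<in> P \<and> Suc j \<in> e x)"

definition multi_ext_of :: "'a set \<Rightarrow> nat \<Rightarrow> (nat \<Rightarrow> 'a) \<Rightarrow> 'a \<Rightarrow> nat set" where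
  "multi_ext_of P N lb x = (if x \<in> P then {i. 1 \<le> i \<and> i \<le> N \<and> lb (i - 1) = x} else {})"

lemma ext_label:
  assumes "lin_multi_ext P N e" "j < N"
  shows "ext_label P e j \<in> P" "Suc j \<in> e (ext_label P e j)"
proof -
  have "\<exists>!x. x \<in> P \<and> Suc j \<in> e x" using assms unfolding lin_multi_ext_def by auto
  then have "ext_label P e j \<in> P \<and> Suc j \<in> e (ext_label P e j)"
    unfolding ext_label_def by (rule theI')
  then show "ext_label P e j \<in> P" "Suc j \<in> e (ext_label P e j)" by auto
qed

lemma ext_label_eqI:
  assumes e: "lin_multi_ext P N e" and "x \<in> P" "Suc j \<in> e x"
  shows "ext_label P e j = x"
proof -
  have "Suc j \<in> {1..N}" using assms unfolding lin_multi_ext_def by blast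
  then have "\<exists>!x. x \<in> P \<and> Suc j \<in> e x" using e unfolding lin_multi_ext_def by blast
  then show ?thesis unfolding ext_label_def by (rule the1_equality) (simp add: assms(2,3))
qed

lemma multi_ext_labelling_ext_label:
  assumes e: "lin_multi_ext P N e"
  shows "multi_ext_labelling P N (ext_label P e)"
proof -
  have fin: "finite (e x)" if "x \<in> P" for x
    using e that unfolding lin_multi_ext_def by (meson finite_atLeastAtMost finite_subset)
  have "ext_label P e j \<noteq> ext_label P e (Suc j)" if "Suc j < N" for j
    using e ext_label[OF e, of j] ext_label[OF e that] that unfolding lin_multi_ext_def by auto
  moreover have "\<exists>j<N. ext_label P e j = x" if x: "x \<in> P" for x
  proof -
    obtain i where i: "i \<in> e x" using e x unfolding lin_multi_ext_def by blast
    then have "i \<in> {1..N}" using e x unfolding lin_multi_ext_def by blast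
    then obtain j where "i = Suc j" "j < N" by (cases i) auto
    with ext_label_eqI[OF e x] i show ?thesis by blast
  qed
  moreover have "i < j" if ij: "i < N" "j < N" "ext_label P e i < ext_label P e j" for i j
  proof -
    let ?x = "ext_label P e i" and ?y = "ext_label P e j"
    have "Max (e ?x) < Min (e ?y)"
      using e ext_label(1)[OF e ij(1)] ext_label(1)[OF e ij(2)] ij(3) unfolding lin_multi_ext_def by blast
    moreover have "Suc i \<le> Max (e ?x)" "Min (e ?y) \<le> Suc j"
      using ext_label[OF e ij(1)] ext_label[OF e ij(2)] fin by auto
    ultimately show ?thesis by linarith
  qed
  ultimately show ?thesis using ext_label(1)[OF e] unfolding multi_ext_labelling_def by blast
qed

lemma multi_ext_of_ext_label:
  assumes e: "lin_multi_ext P N e"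
  shows "multi_ext_of P N (ext_label P e) = e"
proof
  fix x
  have "i \<in> e x \<longleftrightarrow> 1 \<le> i \<and> i \<le> N \<and> ext_label P e (i - 1) = x" if x: "x \<in> P" for i
  proof
    assume i: "i \<in> e x"
    then have "i \<in> {1..N}" using e x unfolding lin_multi_ext_def by blast
    with ext_label_eqI[OF e x, of "i - 1"] i show "1 \<le> i \<and> i \<le> N \<and> ext_label P e (i - 1) = x" by simp
  next
    assume "1 \<le> i \<and> i \<le> N \<and> ext_label P e (i - 1) = x"
    with ext_label(2)[OF e, of "i - 1"] show "i \<in> e x" by auto
  qed
  then show "multi_ext_of P N (ext_label P e) x = e x"
    using e unfolding multi_ext_of_def lin_multi_ext_def by auto
qed

lemma lin_multi_ext_eqI:
  assumes "lin_multi_ext P N e" "lin_multi_ext P N e'" "\<forall>j<N. ext_label P e j = ext_label P e' j"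
  shows "e = e'"
proof -
  have "multi_ext_of P N (ext_label P e) = multi_ext_of P N (ext_label P e')"
    using assms(3) unfolding multi_ext_of_def by (intro ext) (auto simp: le_simps)
  then show ?thesis using multi_ext_of_ext_label assms(1,2) by metis
qed

lemma lin_multi_ext_multi_ext_of:
  assumes lb: "multi_ext_labelling P N lb"
  shows "lin_multi_ext P N (multi_ext_of P N lb)" "\<forall>j<N. ext_label P (multi_ext_of P N lb) j = lb j"
proof -
  let ?e = "multi_ext_of P N lb"
  have mem: "i \<in> ?e x \<longleftrightarrow> x \<in> P \<and> 1 \<le> i \<and> i \<le> N \<and> lb (i - 1) = x" for i x
    unfolding multi_ext_of_def by auto
  have fin: "finite (?e x)" for x
    by (rule finite_subset[of _ "{1..N}"]) (auto simp: mem)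
  have in_e: "Suc j \<in> ?e (lb j)" if "j < N" for j
    using lb that unfolding mem multi_ext_labelling_def by simp
  have nonempty: "?e x \<noteq> {}" if x: "x \<in> P" for x
  proof -
    obtain j where "j < N" "lb j = x" using lb x unfolding multi_ext_labelling_def by blast
    with in_e show ?thesis by blast
  qed
  have "Max (?e x) < Min (?e y)" if xy: "x \<in> P" "y \<in> P" "x < y" for x y
  proof -
    have "Max (?e x) \<in> ?e x" "Min (?e y) \<in> ?e y" using fin nonempty xy by auto
    then have "lb (Max (?e x) - 1) < lb (Min (?e y) - 1)" "1 \<le> Max (?e x)" "1 \<le> Min (?e y)"
      "Max (?e x) \<le> N" "Min (?e y) \<le> N"
      using xy(3) unfolding mem by auto
    then have "Max (?e x) - 1 < Min (?e y) - 1" using lb unfolding multi_ext_labelling_def by auto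
    then show ?thesis by linarith
  qed
  moreover have "\<exists>!x. x \<in> P \<and> i \<in> ?e x" if "i \<in> {1..N}" for i
    using lb that unfolding mem multi_ext_labelling_def by auto
  moreover have "\<not> (i \<in> ?e x \<and> Suc i \<in> ?e x)" for x i
    using lb unfolding mem multi_ext_labelling_def by (cases i) (auto simp: Suc_le_eq)
  ultimately show e: "lin_multi_ext P N ?e"
    unfolding lin_multi_ext_def using nonempty by (auto simp: mem)
  show "\<forall>j<N. ext_label P ?e j = lb j"
    using ext_label_eqI[OF e] lb in_e unfolding multi_ext_labelling_def by blast
qed

lemma card_le_lin_multi_ext:
  assumes "finite P" "lin_multi_ext P N e"
  shows "card P \<le> N"
proof -
  have "\<forall>x\<in>P. \<exists>j<N. ext_label P e j = x"
    using multi_ext_labelling_ext_label[OF assms(2)] unfolding multi_ext_labelling_def by blast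
  then have "P \<subseteq> ext_label P e ` {..<N}" by auto
  then have "card P \<le> card (ext_label P e ` {..<N})" by (rule card_mono[rotated]) simp
  also have "\<dots> \<le> N" using card_image_le[of "{..<N}"] by simp
  finally show ?thesis .
qed

lemma length_ext_word [simp]: "length (ext_word P \<theta> N e) = N"
  unfolding ext_word_def by simp

lemma ext_word_eq_map: "ext_word P \<theta> N e = map (\<lambda>j. \<theta> (ext_label P e j)) [0..<N]"
  unfolding ext_word_def ext_label_def by (simp add: map_Suc_upt[symmetric] del: upt_Suc)

lemma inj_on_ext_word:
  assumes "inj_on \<theta> P"
  shows "inj_on (ext_word P \<theta> N) {e. lin_multi_ext P N e}"
proof (rule inj_onI)
  fix e e' assume e: "e \<in> {e. lin_multi_ext P N e}" and e': "e' \<in> {e. lin_multi_ext P N e}"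
    and eq: "ext_word P \<theta> N e = ext_word P \<theta> N e'"
  have "ext_label P e j = ext_label P e' j" if "j < N" for j
  proof -
    have "\<theta> (ext_label P e j) = \<theta> (ext_label P e' j)"
      using arg_cong[OF eq, of "\<lambda>w. w ! j"] that by (simp add: ext_word_eq_map)
    with assms ext_label(1)[of P N e j] ext_label(1)[of P N e' j] e e' that
    show ?thesis by (simp add: inj_on_eq_iff)
  qed
  with e e' show "e = e'" by (auto intro: lin_multi_ext_eqI)
qed

section \<open>The composition of a word\<close>

lemma sum_take_diffs:
  fixes xs :: "nat list"
  assumes "sorted (xs @ [L])" "j \<le> length xs"
  shows "sum_list (take (Suc j) (map2 (-) (xs @ [L]) (0 # xs))) = (xs @ [L]) ! j"
  using assms(2)
proof (induction j)
  case 0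
  then show ?case by (cases xs) auto
next
  case (Suc j)
  let ?c = "map2 (-) (xs @ [L]) (0 # xs)"
  have "take (Suc (Suc j)) ?c = take (Suc j) ?c @ [(xs @ [L]) ! Suc j - xs ! j]"
    using Suc.prems by (simp add: take_Suc_conv_app_nth)
  moreover have "xs ! j = (xs @ [L]) ! j" using Suc.prems by (simp add: nth_append)
  moreover have "(xs @ [L]) ! j \<le> (xs @ [L]) ! Suc j"
    using assms(1) Suc.prems by (intro sorted_nth_mono) auto
  ultimately show ?case using Suc.IH Suc.prems by simp
qed

lemma finite_descents: "finite (descents w)"
  unfolding descents_def by (rule finite_subset[of _ "{..<length w}"]) auto

lemma sorted_descents_length: "sorted (sorted_list_of_set (descents w) @ [length w])"
  using finite_descents[of w] unfolding descents_def by (auto simp: sorted_append less_imp_le)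

lemma sum_list_comp_of_word: "sum_list (comp_of_word w) = length w"
proof -
  let ?s = "sorted_list_of_set (descents w)"
  have "sum_list (comp_of_word w) = sum_list (take (Suc (length ?s)) (map2 (-) (?s @ [length w]) (0 # ?s)))"
    unfolding comp_of_word_def Let_def by simp
  also have "\<dots> = length w"
    using sum_take_diffs[OF sorted_descents_length[of w], of "length ?s"] by (simp add: nth_append)
  finally show ?thesis .
qed

lemma Sset_comp_of_word: "Sset (comp_of_word w) = descents w"
proof -
  let ?s = "sorted_list_of_set (descents w)"
  let ?c = "map2 (-) (?s @ [length w]) (0 # ?s)"
  have "Sset (comp_of_word w) = {sum_list (take (Suc i) ?c) | i. i < length ?s}"
    unfolding Sset_def comp_of_word_def Let_def
    by (auto simp: gr0_conv_Suc Suc_le_eq simp del: take_Suc)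
  also have "\<dots> = {?s ! i | i. i < length ?s}"
  proof (intro Collect_cong ex_cong1)
    fix x i
    have "i < length ?s \<Longrightarrow> sum_list (take (Suc i) ?c) = ?s ! i"
      using sum_take_diffs[OF sorted_descents_length[of w], of i] by (simp add: nth_append)
    then show "(x = sum_list (take (Suc i) ?c) \<and> i < length ?s) = (x = ?s ! i \<and> i < length ?s)" by auto
  qed
  also have "\<dots> = descents w"
    by (metis set_conv_nth set_sorted_list_of_set finite_descents)
  finally show ?thesis .
qed

definition fillings :: "nat list \<Rightarrow> nat multiset \<Rightarrow> (nat \<Rightarrow> nat multiset) set" where
  "fillings w \<mu> = {\<tau>. (\<forall>j. j \<ge> length w \<longrightarrow> \<tau> j = {#}) \<and> (\<forall>j < length w. pos_mset (\<tau> j)) \<and>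
      (\<forall>j. Suc j < length w \<longrightarrow> mmax (\<tau> j) \<le> mmin (\<tau> (Suc j)) \<and>
          (Suc j \<in> descents w \<longrightarrow> mmax (\<tau> j) < mmin (\<tau> (Suc j)))) \<and>
      (\<Sum>j < length w. \<tau> j) = \<mu>}"

lemma Lhat_comp_of_word: "Lhat (comp_of_word w) \<mu> = real (card (fillings w \<mu>))"
  unfolding Lhat_def fillings_def sum_list_comp_of_word Sset_comp_of_word ..

lemma Suc_in_descents_map_iff:
  "Suc j \<in> descents (map f [0..<N]) \<longleftrightarrow> Suc j < N \<and> f (Suc j) < f j"
  unfolding descents_def by auto

section \<open>The bijection\<close>

lemma lex_chain_of_filling:
  assumes inj: "inj_on \<theta> P" and lb: "multi_ext_labelling P N lb"
    and \<tau>: "\<tau> \<in> fillings (map (\<lambda>j. \<theta> (lb j)) [0..<N]) \<mu>"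
  shows "lex_chain \<theta> N lb \<tau>"
  unfolding lex_chain_def
proof (intro conjI allI impI)
  fix j assume "j < N"
  then show "\<tau> j \<noteq> {#}" using \<tau> unfolding fillings_def pos_mset_def by auto
next
  fix j assume j: "Suc j < N"
  have "lb j \<in> P" "lb (Suc j) \<in> P" and lb_ne: "lb j \<noteq> lb (Suc j)"
    using lb j unfolding multi_ext_labelling_def by auto
  then have "\<theta> (lb j) \<noteq> \<theta> (lb (Suc j))" using inj by (auto simp: inj_on_eq_iff)
  moreover have "mmax (\<tau> j) \<le> mmin (\<tau> (Suc j))"
    and "\<theta> (lb (Suc j)) < \<theta> (lb j) \<Longrightarrow> mmax (\<tau> j) < mmin (\<tau> (Suc j))"
    using \<tau> j unfolding fillings_def by (auto simp: Suc_in_descents_map_iff)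
  ultimately have "(a, \<theta> (lb j)) < (b, \<theta> (lb (Suc j)))" if "a \<in># \<tau> j" "b \<in># \<tau> (Suc j)" for a b
    using mmax_ge[OF that(1)] mmin_le[OF that(2)] by (cases "\<theta> (lb (Suc j)) < \<theta> (lb j)") auto
  with lb_ne show "lb j \<noteq> lb (Suc j)" "\<forall>a\<in>#\<tau> j. \<forall>b\<in>#\<tau> (Suc j). (a, \<theta> (lb j)) < (b, \<theta> (lb (Suc j)))"
    by auto
qed

lemma filling_of_lex_chain:
  assumes c: "lex_chain \<theta> N lb \<tau>" and zero: "\<forall>j\<ge>N. \<tau> j = {#}" and pos: "\<forall>j<N. 0 \<notin># \<tau> j"
  shows "\<tau> \<in> fillings (map (\<lambda>j. \<theta> (lb j)) [0..<N]) (\<Sum>j<N. \<tau> j)"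
proof -
  have less: "(mmax (\<tau> j), \<theta> (lb j)) < (mmin (\<tau> (Suc j)), \<theta> (lb (Suc j)))" if "Suc j < N" for j
  proof -
    have "\<tau> j \<noteq> {#}" "\<tau> (Suc j) \<noteq> {#}" using c that unfolding lex_chain_def by auto
    then show ?thesis using lex_chain_less[OF c lessI that] mmax_in mmin_in by blast
  qed
  have "mmax (\<tau> j) \<le> mmin (\<tau> (Suc j))" "\<theta> (lb (Suc j)) < \<theta> (lb j) \<Longrightarrow> mmax (\<tau> j) < mmin (\<tau> (Suc j))"
    if "Suc j < N" for j
    using less[OF that] by auto
  moreover have "\<forall>j<N. \<tau> j \<noteq> {#}" using c unfolding lex_chain_def by blast
  ultimately show ?thesis
    using zero pos unfolding fillings_def pos_mset_def by (auto simp: Suc_in_descents_map_iff)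
qed

lemma lex_chain_ext_label:
  assumes "inj_on \<theta> P" "lin_multi_ext P N e" "\<tau> \<in> fillings (ext_word P \<theta> N e) \<mu>"
  shows "lex_chain \<theta> N (ext_label P e) \<tau>"
  using lex_chain_of_filling[OF assms(1) multi_ext_labelling_ext_label[OF assms(2)]] assms(3)
  by (simp add: ext_word_eq_map)

lemma mvp_chain_content_ext_label:
  assumes fin: "finite P" and inj: "inj_on \<theta> P" and e: "lin_multi_ext P N e"
    and \<tau>: "\<tau> \<in> fillings (ext_word P \<theta> N e) \<mu>"
  shows "mvp P \<theta> (chain_content N (ext_label P e) \<tau>)" "(\<Sum>p\<in>P. chain_content N (ext_label P e) \<tau> p) = \<mu>"
proof -
  have lb: "multi_ext_labelling P N (ext_label P e)" by (rule multi_ext_labelling_ext_label[OF e])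
  have "\<forall>j<N. 0 \<notin># \<tau> j" using \<tau> unfolding fillings_def pos_mset_def by simp
  with lex_chain_ext_label[OF inj e \<tau>] lb show "mvp P \<theta> (chain_content N (ext_label P e) \<tau>)"
    by (rule mvp_chain_content)
  have "\<forall>j<N. ext_label P e j \<in> P" using lb unfolding multi_ext_labelling_def by blast
  with \<tau> show "(\<Sum>p\<in>P. chain_content N (ext_label P e) \<tau> p) = \<mu>"
    unfolding fillings_def by (simp add: sum_chain_content[OF fin])
qed

lemma mvp_obtain_filling:
  assumes fin: "finite P" and inj: "inj_on \<theta> P" and mvp: "mvp P \<theta> \<sigma>"
  obtains N e \<tau> where "lin_multi_ext P N e" "\<tau> \<in> fillings (ext_word P \<theta> N e) (\<Sum>p\<in>P. \<sigma> p)"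
    "\<sigma> = chain_content N (ext_label P e) \<tau>"
proof -
  obtain N lb \<tau> where c: "lex_chain \<theta> N lb \<tau>" and content: "chain_content N lb \<tau> = \<sigma>"
    and zero: "\<forall>j\<ge>N. \<tau> j = {#}" and pos: "\<forall>j<N. 0 \<notin># \<tau> j" and lb: "multi_ext_labelling P N lb"
    using mvp_lex_chain[OF fin inj mvp] by blast
  define e where "e = multi_ext_of P N lb"
  have e: "lin_multi_ext P N e" and lab: "\<forall>j<N. ext_label P e j = lb j"
    using lin_multi_ext_multi_ext_of[OF lb] unfolding e_def by auto
  have "\<forall>j<N. lb j \<in> P" using lb unfolding multi_ext_labelling_def by blast
  then have "(\<Sum>p\<in>P. \<sigma> p) = (\<Sum>j<N. \<tau> j)" using sum_chain_content[OF fin] content by blast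
  moreover have "ext_word P \<theta> N e = map (\<lambda>j. \<theta> (lb j)) [0..<N]" using lab by (simp add: ext_word_eq_map)
  moreover have "\<sigma> = chain_content N (ext_label P e) \<tau>"
    by (simp only: chain_content_cong[OF lab] content)
  ultimately show ?thesis using that e filling_of_lex_chain[OF c zero pos] by simp
qed

lemma inj_on_chain_content_fillings:
  assumes inj: "inj_on \<theta> P"
  shows "inj_on (\<lambda>(N, e, \<tau>). chain_content N (ext_label P e) \<tau>)
    (SIGMA N:UNIV. SIGMA e:{e. lin_multi_ext P N e}. fillings (ext_word P \<theta> N e) \<mu>)"
proof (rule inj_onI, clarsimp)
  fix N e \<tau> N' e' \<tau>'
  assume e: "lin_multi_ext P N e" and \<tau>: "\<tau> \<in> fillings (ext_word P \<theta> N e) \<mu>"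
    and e': "lin_multi_ext P N' e'" and \<tau>': "\<tau>' \<in> fillings (ext_word P \<theta> N' e') \<mu>"
    and eq: "chain_content N (ext_label P e) \<tau> = chain_content N' (ext_label P e') \<tau>'"
  from lex_chain_unique[OF lex_chain_ext_label[OF inj e \<tau>] lex_chain_ext_label[OF inj e' \<tau>'] eq]
  have N: "N' = N" and same: "\<forall>j<N. ext_label P e j = ext_label P e' j \<and> \<tau> j = \<tau>' j" by auto
  have "e = e'" using lin_multi_ext_eqI[OF e e'[unfolded N]] same by blast
  moreover have "\<tau> = \<tau>'"
  proof
    fix j show "\<tau> j = \<tau>' j"
      using same \<tau> \<tau>' unfolding N fillings_def by (cases "j < N") auto
  qed
  ultimately show "N = N' \<and> e = e' \<and> \<tau> = \<tau>'" using N by simp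
qed

lemma length_le_size_of_filling:
  assumes "\<tau> \<in> fillings w \<mu>"
  shows "length w \<le> size \<mu>"
proof -
  have "length w = (\<Sum>j<length w. 1)" by simp
  also have "\<dots> \<le> (\<Sum>j<length w. size (\<tau> j))"
    using assms unfolding fillings_def pos_mset_def by (intro sum_mono) (auto simp: Suc_le_eq nonempty_has_size)
  also have "\<dots> = size \<mu>" using assms unfolding fillings_def by auto
  finally show ?thesis .
qed

lemma finite_submultisets: "finite {M. M \<subseteq># \<mu>}"
proof (rule finite_subset)
  show "{M. M \<subseteq># \<mu>} \<subseteq> mset ` {xs. set xs \<subseteq> set_mset \<mu> \<and> length xs \<le> size \<mu>}"
  proof
    fix M assume "M \<in> {M. M \<subseteq># \<mu>}"
    moreover obtain xs where "mset xs = M" using ex_mset by blast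
    ultimately show "M \<in> mset ` {xs. set xs \<subseteq> set_mset \<mu> \<and> length xs \<le> size \<mu>}"
      by (force dest: mset_subset_eqD size_mset_mono)
  qed
  show "finite (mset ` {xs. set xs \<subseteq> set_mset \<mu> \<and> length xs \<le> size \<mu>})"
    by (intro finite_imageI finite_lists_length_le) simp
qed

lemma finite_fillings: "finite (fillings w \<mu>)"
proof (rule finite_subset)
  have "\<tau> j \<subseteq># (\<Sum>i<length w. \<tau> i)" if "j < length w" for \<tau> :: "nat \<Rightarrow> nat multiset" and j
    using that by (simp add: sum.remove[of _ j])
  then show "fillings w \<mu> \<subseteq>
      {\<tau>. \<forall>j. (j \<in> {..<length w} \<longrightarrow> \<tau> j \<in> {M. M \<subseteq># \<mu>}) \<and> (j \<notin> {..<length w} \<longrightarrow> \<tau> j = {#})}"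
    unfolding fillings_def by auto
  show "finite {\<tau>. \<forall>j. (j \<in> {..<length w} \<longrightarrow> \<tau> j \<in> {M. M \<subseteq># \<mu>}) \<and> (j \<notin> {..<length w} \<longrightarrow> \<tau> j = {#})}"
    by (rule finite_set_of_finite_funs) (simp_all add: finite_submultisets)
qed

lemma finite_lin_multi_exts:
  assumes "finite P"
  shows "finite {e. lin_multi_ext P N e}"
proof (rule finite_subset)
  show "{e. lin_multi_ext P N e} \<subseteq> {e. \<forall>x. (x \<in> P \<longrightarrow> e x \<in> Pow {1..N}) \<and> (x \<notin> P \<longrightarrow> e x = {})}"
    unfolding lin_multi_ext_def by auto
  show "finite {e. \<forall>x. (x \<in> P \<longrightarrow> e x \<in> Pow {1..N}) \<and> (x \<notin> P \<longrightarrow> e x = ({} :: nat set))}"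
    by (rule finite_set_of_finite_funs[OF assms]) simp
qed

definition num_ext_fillings :: "'a::order set \<Rightarrow> ('a \<Rightarrow> nat) \<Rightarrow> nat \<Rightarrow> nat multiset \<Rightarrow> nat" where
  "num_ext_fillings P \<theta> N \<mu> = (\<Sum>e\<in>{e. lin_multi_ext P N e}. card (fillings (ext_word P \<theta> N e) \<mu>))"

lemma num_ext_fillings_eq_0_if_size_less:
  assumes "size \<mu> < N"
  shows "num_ext_fillings P \<theta> N \<mu> = 0"
proof -
  have "fillings (ext_word P \<theta> N e) \<mu> = {}" for e
    using length_le_size_of_filling[of _ "ext_word P \<theta> N e" \<mu>] assms by fastforce
  then show ?thesis unfolding num_ext_fillings_def by simp
qed

lemma num_ext_fillings_eq_0_if_less_card:
  assumes "finite P" "N < card P"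
  shows "num_ext_fillings P \<theta> N \<mu> = 0"
proof -
  have no_ext: "{e. lin_multi_ext P N e} = {}" using card_le_lin_multi_ext[OF assms(1)] assms(2) by fastforce
  show ?thesis unfolding num_ext_fillings_def no_ext by simp
qed

lemma card_mvp_eq_sum_num_ext_fillings:
  assumes fin: "finite P" and inj: "inj_on \<theta> P"
  shows "card {\<sigma>. mvp P \<theta> \<sigma> \<and> (\<Sum>p\<in>P. \<sigma> p) = \<mu>} = (\<Sum>N\<le>size \<mu>. num_ext_fillings P \<theta> N \<mu>)"
proof -
  let ?T = "SIGMA N:{..size \<mu>}. SIGMA e:{e. lin_multi_ext P N e}. fillings (ext_word P \<theta> N e) \<mu>"
  let ?F = "\<lambda>(N, e, \<tau>). chain_content N (ext_label P e) \<tau>"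
  have "?F ` ?T = {\<sigma>. mvp P \<theta> \<sigma> \<and> (\<Sum>p\<in>P. \<sigma> p) = \<mu>}"
  proof (intro equalityI subsetI)
    fix \<sigma> assume "\<sigma> \<in> ?F ` ?T"
    then show "\<sigma> \<in> {\<sigma>. mvp P \<theta> \<sigma> \<and> (\<Sum>p\<in>P. \<sigma> p) = \<mu>}"
      using mvp_chain_content_ext_label[OF fin inj] by auto
  next
    fix \<sigma> assume "\<sigma> \<in> {\<sigma>. mvp P \<theta> \<sigma> \<and> (\<Sum>p\<in>P. \<sigma> p) = \<mu>}"
    then obtain N e \<tau> where "lin_multi_ext P N e" "\<tau> \<in> fillings (ext_word P \<theta> N e) \<mu>"
      "\<sigma> = chain_content N (ext_label P e) \<tau>"
      using mvp_obtain_filling[OF fin inj] by blast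
    moreover have "N \<le> size \<mu>" using length_le_size_of_filling calculation(2) by fastforce
    ultimately show "\<sigma> \<in> ?F ` ?T" by force
  qed
  moreover have "inj_on ?F ?T" by (rule inj_on_subset[OF inj_on_chain_content_fillings[OF inj]]) auto
  ultimately have "card {\<sigma>. mvp P \<theta> \<sigma> \<and> (\<Sum>p\<in>P. \<sigma> p) = \<mu>} = card ?T" using card_image by fastforce
  also have "\<dots> = (\<Sum>N\<le>size \<mu>. num_ext_fillings P \<theta> N \<mu>)"
    using finite_lin_multi_exts[OF fin] finite_fillings by (simp add: num_ext_fillings_def finite_SigmaI)
  finally show ?thesis .
qed

lemma sum_Jtilde_Lhat:
  assumes "inj_on \<theta> P"
  shows "(\<Sum>w\<in>Jtilde P \<theta> N. Lhat (comp_of_word w) \<mu>) = real (num_ext_fillings P \<theta> N \<mu>)"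
proof -
  have "Jtilde P \<theta> N = ext_word P \<theta> N ` {e. lin_multi_ext P N e}" unfolding Jtilde_def by blast
  then show ?thesis using sum.reindex[OF inj_on_ext_word[OF assms]]
    by (simp add: Lhat_comp_of_word num_ext_fillings_def)
qed

theorem mainTheorem4:
  fixes P :: "'a::order set" and \<theta> :: "'a \<Rightarrow> nat" and n :: nat
  assumes "finite P" and "card P = n" and "bij_betw \<theta> P {1..n}"
  shows "Khat P \<theta> =
    (\<lambda>\<mu>. \<Sum>N. if n \<le> N then (\<Sum>w\<in>Jtilde P \<theta> N. Lhat (comp_of_word w) \<mu>) else 0)"
proof
  fix \<mu>
  have inj: "inj_on \<theta> P" using assms(3) by (rule bij_betw_imp_inj_on)
  have summand: "(if n \<le> N then (\<Sum>w\<in>Jtilde P \<theta> N. Lhat (comp_of_word w) \<mu>) else 0) =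
      real (num_ext_fillings P \<theta> N \<mu>)" for N
    using sum_Jtilde_Lhat[OF inj] num_ext_fillings_eq_0_if_less_card[OF assms(1)] assms(2) by simp
  have "(\<Sum>N. real (num_ext_fillings P \<theta> N \<mu>)) = (\<Sum>N\<le>size \<mu>. real (num_ext_fillings P \<theta> N \<mu>))"
    by (intro suminf_finite) (auto simp: num_ext_fillings_eq_0_if_size_less)
  also have "\<dots> = Khat P \<theta> \<mu>"
    unfolding Khat_def card_mvp_eq_sum_num_ext_fillings[OF assms(1) inj] by simp
  finally show "Khat P \<theta> \<mu> = (\<Sum>N. if n \<le> N then (\<Sum>w\<in>Jtilde P \<theta> N. Lhat (comp_of_word w) \<mu>) else 0)"
    unfolding summand by simp
qed

end
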